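(* Let $n\ge 2$ and let $\triangle\subset\mathbb{R}^{n-1}$ be a non-degenerate simplex with $n$ vertices and inradius $r$, and let $k\in[n]$. Then every closed Euclidean ball that intersects the affine span of each $(k-1)$-dimensional face of $\triangle$ has radius at least $\lambda_n r$, where \[ \lambda_n=\sqrt{\frac{(n-1)(n-k)}{k}}. \]
   Context: A $(k-1)$-dimensional face of $\triangle$ is the convex hull of $k$ of its vertices. The inradius is the radius of the largest ball contained in $\triangle$. *)

theory Defs
  imports "HOL-Analysis.Analysis"
begin

definition inradius :: "'a::euclidean_space set \<Rightarrow> real" where
  "inradius S = Sup {r. r \<ge> 0 \<and> (\<exists>c. cball c r \<subseteq> S)}"

end

theory Submission
  imports Defs
begin

(* Let h v be the gradient of the barycentric coordinate l v of the simplex with respect to the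
   vertex v; so norm (h v) is the reciprocal of the height of v over the opposite facet, and the
   h v sum to 0. If a ball of radius r lies in the simplex, each l v is at least r * norm (h v)
   at its centre, and the l v sum to 1; hence the inradius is at most 1 / T, T = sum of the norm (h v).

   It remains to show (n - 1) (n - k) / k <= rho^2 T^2 for a ball of radius rho around c that
   meets the affine hulls of all k-vertex faces. This goes by induction on n, starting at
   n = k + 1, where it is Cauchy-Schwarz for the identity sum l v (c) = 1. For the step, project c
   orthogonally onto the hyperplane of the facet opposite j: by Pythagoras the ball of squared radius
   rho^2 - l j (c)^2 / norm (h j)^2 around the projection meets all k-vertex faces of that facet,
   whose barycentric gradients are the components of the h i orthogonal to h j. The inductive bounds
   for the n facets are combined with weights norm (h j) via Cauchy-Schwarz, a Hoelder inequality and
   a bound on the sum of the areas of the parallelograms spanned by pairs h j, h i.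

   Neither the argument nor any lemma depends on the dimension of the ambient space. *)

section \<open>Vector rejection\<close>

(* The component of x orthogonal to a; it is x itself for a = 0, since division by 0 yields 0. *)
definition reject :: "'a::real_inner \<Rightarrow> 'a \<Rightarrow> 'a" where
  "reject a x = x - ((x \<bullet> a) / (norm a)\<^sup>2) *\<^sub>R a"

lemma linear_reject: "linear (reject a)"
  unfolding reject_def by (auto simp: linear_iff inner_add_left add_divide_distrib algebra_simps)

lemma reject_self [simp]: "reject a a = 0"
  by (cases "a = 0") (simp_all add: reject_def dot_square_norm)

lemma inner_reject_left: "a \<bullet> y = 0 \<Longrightarrow> reject a x \<bullet> y = x \<bullet> y"
  by (simp add: reject_def inner_diff_left)

lemma norm_reject_sq: "(norm (reject a x))\<^sup>2 = (norm x)\<^sup>2 - (x \<bullet> a)\<^sup>2 / (norm a)\<^sup>2"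
proof (cases "a = 0")
  case False
  then show ?thesis
    by (simp add: reject_def power2_norm_eq_inner inner_diff_left inner_diff_right inner_commute
        field_simps) (simp add: power2_eq_square algebra_simps)
qed (simp add: reject_def)

lemma norm_mult_norm_reject_sq: "(norm a * norm (reject a x))\<^sup>2 = (norm a * norm x)\<^sup>2 - (a \<bullet> x)\<^sup>2"
  by (cases "a = 0") (simp_all add: norm_reject_sq power_mult_distrib field_simps inner_commute)

lemma Cauchy_Schwarz_ineq_sum_div:
  fixes x p :: "'b \<Rightarrow> real"
  assumes "\<And>i. i \<in> I \<Longrightarrow> 0 < p i"
  shows "(\<Sum>i\<in>I. x i)\<^sup>2 \<le> (\<Sum>i\<in>I. p i) * (\<Sum>i\<in>I. (x i)\<^sup>2 / p i)"
proof -
  have p: "0 \<le> p i" "p i \<noteq> 0" if "i \<in> I" for i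
    using assms[OF that] by auto
  have "(\<Sum>i\<in>I. x i) = (\<Sum>i\<in>I. sqrt (p i) * (x i / sqrt (p i)))"
    by (intro sum.cong) (simp_all add: p)
  moreover have "(\<Sum>i\<in>I. (sqrt (p i))\<^sup>2) = (\<Sum>i\<in>I. p i)"
    by (intro sum.cong) (simp_all add: p)
  moreover have "(\<Sum>i\<in>I. (x i / sqrt (p i))\<^sup>2) = (\<Sum>i\<in>I. (x i)\<^sup>2 / p i)"
    by (intro sum.cong) (simp_all add: p power_divide)
  ultimately show ?thesis
    using Cauchy_Schwarz_ineq_sum[of "\<lambda>i. sqrt (p i)" "\<lambda>i. x i / sqrt (p i)" I] by simp
qed

lemma Hoelder_ineq_sum_inverse_square:
  fixes t x :: "'b \<Rightarrow> real"
  assumes "\<And>i. i \<in> I \<Longrightarrow> 0 < t i" "\<And>i. i \<in> I \<Longrightarrow> 0 < x i"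
  shows "(\<Sum>i\<in>I. t i) ^ 3 \<le> (\<Sum>i\<in>I. t i / (x i)\<^sup>2) * (\<Sum>i\<in>I. t i * x i)\<^sup>2"
proof -
  define T P M S where "T = (\<Sum>i\<in>I. t i)" and "P = (\<Sum>i\<in>I. t i / x i)"
    and "M = (\<Sum>i\<in>I. t i / (x i)\<^sup>2)" and "S = (\<Sum>i\<in>I. t i * x i)"
  have nz: "t i \<noteq> 0" "x i \<noteq> 0" if "i \<in> I" for i
    using assms that by force+
  have TSP: "T\<^sup>2 \<le> S * P"
  proof -
    have "(\<Sum>i\<in>I. (t i)\<^sup>2 / (t i * x i)) = P"
      unfolding P_def by (intro sum.cong) (simp_all add: nz power2_eq_square)
    then show ?thesis
      using Cauchy_Schwarz_ineq_sum_div[of I "\<lambda>i. t i * x i" t] assms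
      unfolding T_def S_def by simp
  qed
  have PTM: "P\<^sup>2 \<le> T * M"
  proof -
    have "(\<Sum>i\<in>I. (t i / x i)\<^sup>2 / t i) = M"
      unfolding M_def by (intro sum.cong) (simp_all add: nz power2_eq_square)
    then show ?thesis
      using Cauchy_Schwarz_ineq_sum_div[of I t "\<lambda>i. t i / x i"] assms
      unfolding T_def P_def by simp
  qed
  have "0 \<le> T" "0 \<le> S" "0 \<le> M"
    unfolding T_def S_def M_def using assms by (auto intro!: sum_nonneg simp: less_imp_le)
  have "(T\<^sup>2)\<^sup>2 \<le> S\<^sup>2 * P\<^sup>2" "S\<^sup>2 * P\<^sup>2 \<le> S\<^sup>2 * (T * M)"
    using power_mono[OF TSP, of 2] mult_left_mono[OF PTM, of "S\<^sup>2"] by (simp_all add: power_mult_distrib)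
  then have "T * T ^ 3 \<le> T * (M * S\<^sup>2)"
    by (simp add: algebra_simps eval_nat_numeral)
  with \<open>0 \<le> T\<close> \<open>0 \<le> M\<close> have "T ^ 3 \<le> M * S\<^sup>2"
    by (cases "T = 0") simp_all
  then show ?thesis
    unfolding T_def M_def S_def .
qed

lemma sq_sum_add_sq_sum_le:
  fixes a b q :: "'b \<Rightarrow> real"
  assumes "\<And>i. i \<in> I \<Longrightarrow> 0 \<le> q i" "\<And>i. i \<in> I \<Longrightarrow> (a i)\<^sup>2 + (b i)\<^sup>2 \<le> (q i)\<^sup>2"
  shows "(\<Sum>i\<in>I. a i)\<^sup>2 + (\<Sum>i\<in>I. b i)\<^sup>2 \<le> (\<Sum>i\<in>I. q i)\<^sup>2"
proof -
  define z where "z i = Complex (a i) (b i)" for i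
  have "cmod (sum z I) \<le> (\<Sum>i\<in>I. cmod (z i))"
    by (rule norm_sum)
  also have "\<dots> \<le> (\<Sum>i\<in>I. q i)"
    using assms by (intro sum_mono) (simp add: z_def complex_norm real_le_lsqrt)
  finally have "(cmod (sum z I))\<^sup>2 \<le> (\<Sum>i\<in>I. q i)\<^sup>2"
    by (rule power_mono) simp
  then show ?thesis
    by (simp add: cmod_power2 z_def)
qed

lemma sum_off_diagonal:
  fixes f :: "'b \<Rightarrow> 'b \<Rightarrow> 'c::ab_group_add"
  assumes "finite V"
  shows "(\<Sum>j\<in>V. \<Sum>i\<in>V - {j}. f j i) = (\<Sum>j\<in>V. \<Sum>i\<in>V. f j i) - (\<Sum>j\<in>V. f j j)"
  using assms by (simp add: sum_diff1 sum_subtractf)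

lemma sum_parallelogram_areas_le:
  fixes a :: "'b \<Rightarrow> 'a::real_inner"
  assumes "finite V" "sum a V = 0"
  shows "real (card V) * (\<Sum>j\<in>V. \<Sum>i\<in>V - {j}. norm (a j) * norm (reject (a j) (a i)))\<^sup>2
    \<le> (real (card V) - 2) * (\<Sum>j\<in>V. norm (a j)) ^ 4"
proof -
  define A T s where "A = (\<Sum>j\<in>V. \<Sum>i\<in>V - {j}. norm (a j) * norm (reject (a j) (a i)))"
    and "T = (\<Sum>j\<in>V. norm (a j))" and "s = (\<Sum>j\<in>V. (norm (a j))\<^sup>2)"
  \<comment> \<open>by Lagrange's identity, (area, a j \<bullet> a i) is a plane vector of length norm (a j) * norm (a i)\<close>
  have "A\<^sup>2 + (\<Sum>j\<in>V. \<Sum>i\<in>V - {j}. a j \<bullet> a i)\<^sup>2 \<le> (\<Sum>j\<in>V. \<Sum>i\<in>V - {j}. norm (a j) * norm (a i))\<^sup>2"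
    unfolding A_def
  proof (rule sq_sum_add_sq_sum_le)
    fix j
    show "(\<Sum>i\<in>V - {j}. norm (a j) * norm (reject (a j) (a i)))\<^sup>2 + (\<Sum>i\<in>V - {j}. a j \<bullet> a i)\<^sup>2
      \<le> (\<Sum>i\<in>V - {j}. norm (a j) * norm (a i))\<^sup>2"
      by (rule sq_sum_add_sq_sum_le) (simp_all add: norm_mult_norm_reject_sq)
  qed (simp add: sum_nonneg)
  moreover have "(\<Sum>j\<in>V. \<Sum>i\<in>V - {j}. a j \<bullet> a i) = - s"
  proof -
    have "(\<Sum>j\<in>V. \<Sum>i\<in>V - {j}. a j \<bullet> a i) = (\<Sum>j\<in>V. a j \<bullet> sum a V) - s"
      using assms(1) by (simp add: sum_off_diagonal s_def power2_norm_eq_inner inner_sum_right)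
    then show ?thesis
      using assms(2) by simp
  qed
  moreover have "(\<Sum>j\<in>V. \<Sum>i\<in>V - {j}. norm (a j) * norm (a i)) = T\<^sup>2 - s"
    using assms(1) by (simp add: sum_off_diagonal T_def s_def power2_eq_square sum_product)
  ultimately have "A\<^sup>2 + s\<^sup>2 \<le> (T\<^sup>2 - s)\<^sup>2"
    by simp
  moreover have "(T\<^sup>2 - s)\<^sup>2 = T ^ 4 - 2 * T\<^sup>2 * s + s\<^sup>2"
    by algebra
  ultimately have "A\<^sup>2 \<le> T ^ 4 - 2 * T\<^sup>2 * s"
    by linarith
  then have "real (card V) * A\<^sup>2 \<le> real (card V) * (T ^ 4 - 2 * T\<^sup>2 * s)"
    by (rule mult_left_mono) simp
  also have "\<dots> = real (card V) * T ^ 4 - 2 * T\<^sup>2 * (real (card V) * s)"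
    by (simp add: algebra_simps)
  also have "\<dots> \<le> real (card V) * T ^ 4 - 2 * T\<^sup>2 * T\<^sup>2"
    using Cauchy_Schwarz_ineq_sum[of "\<lambda>_. 1" "\<lambda>j. norm (a j)" V]
    by (simp add: T_def s_def mult_left_mono)
  also have "\<dots> = (real (card V) - 2) * T ^ 4"
    by algebra
  finally show ?thesis
    unfolding A_def T_def .
qed

(* The inductive step in real numbers: t j = norm (h j), l j is the barycentric coordinate of the
   centre, and the facet opposite j contributes its bound alpha / (x j)^2. *)
lemma combine_facet_bounds:
  fixes t x l :: "'b \<Rightarrow> real"
  assumes t: "\<And>j. j \<in> V \<Longrightarrow> 0 < t j" and x: "\<And>j. j \<in> V \<Longrightarrow> 0 < x j"
    and l: "sum l V = 1" and "0 \<le> \<alpha>"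
    and \<kappa>: "\<kappa> * (\<Sum>j\<in>V. t j * x j)\<^sup>2 \<le> (\<Sum>j\<in>V. t j) ^ 4"
    and R: "\<And>j. j \<in> V \<Longrightarrow> (l j)\<^sup>2 / (t j)\<^sup>2 + \<alpha> / (x j)\<^sup>2 \<le> R"
  shows "1 + \<alpha> * \<kappa> \<le> R * (\<Sum>j\<in>V. t j)\<^sup>2"
proof -
  define T S L M where "T = (\<Sum>j\<in>V. t j)" and "S = (\<Sum>j\<in>V. t j * x j)"
    and "L = (\<Sum>j\<in>V. (l j)\<^sup>2 / t j)" and "M = (\<Sum>j\<in>V. t j / (x j)\<^sup>2)"
  have "finite V" "V \<noteq> {}"
    using l sum.infinite by fastforce+
  then have "0 < T" "0 < S"
    unfolding T_def S_def using t x by (auto intro!: sum_pos)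
  have "1 \<le> T * L"
    using Cauchy_Schwarz_ineq_sum_div[of V t l] t l unfolding T_def L_def by simp
  moreover have "\<kappa> \<le> T * M"
  proof -
    have "\<kappa> * S\<^sup>2 \<le> T * T ^ 3"
      using \<kappa> unfolding T_def S_def by (simp add: eval_nat_numeral)
    also have "\<dots> \<le> T * (M * S\<^sup>2)"
      using Hoelder_ineq_sum_inverse_square[of V t x] t x \<open>0 < T\<close>
      unfolding T_def M_def S_def by (intro mult_left_mono) simp_all
    finally show ?thesis
      using \<open>0 < S\<close> by (simp add: algebra_simps)
  qed
  moreover have "L + \<alpha> * M \<le> R * T"
  proof -
    have "t j * ((l j)\<^sup>2 / (t j)\<^sup>2 + \<alpha> / (x j)\<^sup>2) = (l j)\<^sup>2 / t j + \<alpha> * (t j / (x j)\<^sup>2)"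
      if "j \<in> V" for j
      using t[OF that] by (simp add: field_simps power2_eq_square)
    then have "L + \<alpha> * M = (\<Sum>j\<in>V. t j * ((l j)\<^sup>2 / (t j)\<^sup>2 + \<alpha> / (x j)\<^sup>2))"
      unfolding L_def M_def by (simp add: sum_distrib_left sum.distrib)
    also have "\<dots> \<le> (\<Sum>j\<in>V. t j * R)"
      using t R by (intro sum_mono mult_left_mono) (auto simp: less_imp_le)
    finally show ?thesis
      by (simp add: T_def sum_distrib_left mult.commute)
  qed
  ultimately have "1 + \<alpha> * \<kappa> \<le> T * (L + \<alpha> * M)"
    using \<open>0 \<le> \<alpha>\<close> mult_left_mono[of \<kappa> "T * M" \<alpha>] by (simp add: algebra_simps)
  also have "\<dots> \<le> T * (R * T)"
    using \<open>L + \<alpha> * M \<le> R * T\<close> \<open>0 < T\<close> by (simp add: mult_left_mono)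
  finally show ?thesis
    by (simp add: T_def power2_eq_square mult.assoc mult.left_commute)
qed

section \<open>Barycentric coordinates of a simplex\<close>

(* Under barycentric_gradients V h, barycentric_coord h v is the affine function that is 1 at v
   and vanishes at the other vertices, i.e. the barycentric coordinate for v, with gradient h v. *)
definition barycentric_gradients :: "'a::real_inner set \<Rightarrow> ('a \<Rightarrow> 'a) \<Rightarrow> bool" where
  "barycentric_gradients V h \<longleftrightarrow>
     sum h V = 0 \<and> (\<forall>v\<in>V. \<forall>u\<in>V. u \<noteq> v \<longrightarrow> h v \<bullet> (u - v) = -1)"

definition barycentric_coord :: "('a::real_inner \<Rightarrow> 'a) \<Rightarrow> 'a \<Rightarrow> 'a \<Rightarrow> real" where
  "barycentric_coord h v x = 1 + h v \<bullet> (x - v)"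

lemma barycentric_coord_diff:
  "barycentric_coord h v x - barycentric_coord h v y = h v \<bullet> (x - y)"
  by (simp add: barycentric_coord_def inner_diff_right)

lemma barycentric_gradients_inner:
  assumes "barycentric_gradients V h" "v \<in> V" "u \<in> V"
  shows "h v \<bullet> (u - v) = (if u = v then 0 else -1)"
  using assms by (simp add: barycentric_gradients_def)

lemma barycentric_gradient_nonzero:
  assumes "barycentric_gradients V h" "v \<in> V" "u \<in> V" "u \<noteq> v"
  shows "h v \<noteq> 0"
  using barycentric_gradients_inner[OF assms(1-3)] assms(4) by auto

lemma barycentric_coord_eq_0:
  assumes "barycentric_gradients V h" "v \<in> V" "F \<subseteq> V - {v}" "y \<in> affine hull F"
  shows "barycentric_coord h v y = 0"
proof -
  have "F \<subseteq> {x. h v \<bullet> x = h v \<bullet> v - 1}"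
  proof
    fix u assume "u \<in> F"
    then have "u \<in> V" "u \<noteq> v"
      using assms(3) by auto
    then show "u \<in> {x. h v \<bullet> x = h v \<bullet> v - 1}"
      using barycentric_gradients_inner[OF assms(1,2) \<open>u \<in> V\<close>] by (simp add: inner_diff_right)
  qed
  then have "affine hull F \<subseteq> {x. h v \<bullet> x = h v \<bullet> v - 1}"
    by (rule hull_minimal) (rule affine_hyperplane)
  then show ?thesis
    using assms(4) by (auto simp: barycentric_coord_def inner_diff_right)
qed

lemma barycentric_coord_nonneg:
  assumes "barycentric_gradients V h" "v \<in> V" "x \<in> convex hull V"
  shows "0 \<le> barycentric_coord h v x"
proof -
  have "V \<subseteq> {x. h v \<bullet> x \<ge> h v \<bullet> v - 1}"
  proof
    fix u assume "u \<in> V"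
    then show "u \<in> {x. h v \<bullet> x \<ge> h v \<bullet> v - 1}"
      using barycentric_gradients_inner[OF assms(1,2) \<open>u \<in> V\<close>]
      by (simp add: inner_diff_right split: if_splits)
  qed
  then have "convex hull V \<subseteq> {x. h v \<bullet> x \<ge> h v \<bullet> v - 1}"
    by (rule hull_minimal) (rule convex_halfspace_ge)
  then show ?thesis
    using assms(3) by (auto simp: barycentric_coord_def inner_diff_right)
qed

lemma sum_barycentric_coord:
  assumes "finite V" "V \<noteq> {}" "barycentric_gradients V h"
  shows "(\<Sum>v\<in>V. barycentric_coord h v x) = 1"
proof -
  obtain v0 where v0: "v0 \<in> V"
    using assms(2) by blast
  have "barycentric_coord h v x = h v \<bullet> (x - v0) + (if v0 = v then 1 else 0)" if "v \<in> V" for v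
  proof -
    have "barycentric_coord h v x = h v \<bullet> (x - v0) + (1 + h v \<bullet> (v0 - v))"
      by (simp add: barycentric_coord_def inner_diff_right)
    then show ?thesis
      using barycentric_gradients_inner[OF assms(3) that v0] by simp
  qed
  then have "(\<Sum>v\<in>V. barycentric_coord h v x) = sum h V \<bullet> (x - v0) + 1"
    using assms(1) v0 by (simp add: sum.distrib inner_sum_left)
  then show ?thesis
    using assms(3) by (simp add: barycentric_gradients_def)
qed

lemma barycentric_gradients_facet:
  assumes "finite V" "barycentric_gradients V h" "j \<in> V"
  shows "barycentric_gradients (V - {j}) (\<lambda>i. reject (h j) (h i))"
proof -
  have "(\<Sum>i\<in>V - {j}. reject (h j) (h i)) = reject (h j) (\<Sum>i\<in>V - {j}. h i)"
    by (simp add: linear_sum[OF linear_reject])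
  also have "(\<Sum>i\<in>V - {j}. h i) = - h j"
    using assms by (simp add: sum_diff1 barycentric_gradients_def)
  finally have "(\<Sum>i\<in>V - {j}. reject (h j) (h i)) = 0"
    by (simp add: linear_neg[OF linear_reject])
  moreover have "h j \<bullet> (u - v) = 0" if "u \<in> V - {j}" "v \<in> V - {j}" for u v
    using barycentric_gradients_inner[OF assms(2,3), of u] barycentric_gradients_inner[OF assms(2,3), of v]
      that by (simp add: inner_diff_right)
  ultimately show ?thesis
    using assms(2) by (auto simp: barycentric_gradients_def inner_reject_left)
qed

lemma dual_vector_exists:
  fixes B :: "'a::euclidean_space set"
  assumes "independent B" "b \<in> B"
  shows "\<exists>g. \<forall>u\<in>B. g \<bullet> u = (if u = b then 1 else 0)"
proof -
  obtain f :: "'a \<Rightarrow> real" where "linear f" and "\<forall>u\<in>B. f u = (if u = b then 1 else 0)"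
    using linear_independent_extend[OF assms(1), of "\<lambda>u. if u = b then 1 else 0"] by blast
  moreover have "adjoint f 1 \<bullet> u = f u" for u
    using adjoint_works[OF \<open>linear f\<close>, of u 1] by (simp add: inner_commute)
  ultimately show ?thesis
    by (intro exI[where x = "adjoint f 1"]) simp
qed

lemma barycentric_gradients_exist:
  fixes V :: "'a::euclidean_space set"
  assumes "finite V" "\<not> affine_dependent V"
  shows "\<exists>h. barycentric_gradients V h"
proof (cases "V = {}")
  case True
  then show ?thesis by (simp add: barycentric_gradients_def)
next
  case False
  then obtain v0 where v0: "v0 \<in> V" by blast
  have ind: "independent ((\<lambda>x. x - v0) ` (V - {v0}))"
    using assms(2) affine_dependent_iff_dependent2[OF v0] by simp
  \<comment> \<open>the dual basis of the edges u - v0, completed by the vector that makes the sum 0\<close>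
  have "\<forall>j\<in>V - {v0}. \<exists>g. \<forall>u\<in>V - {v0}. g \<bullet> (u - v0) = (if u = j then 1 else 0)"
  proof
    fix j assume "j \<in> V - {v0}"
    then obtain g where "\<forall>b\<in>(\<lambda>x. x - v0) ` (V - {v0}). g \<bullet> b = (if b = j - v0 then 1 else 0)"
      using dual_vector_exists[OF ind] by blast
    then show "\<exists>g. \<forall>u\<in>V - {v0}. g \<bullet> (u - v0) = (if u = j then 1 else 0)"
      by (intro exI[where x = g] ballI) auto
  qed
  then obtain g where g: "\<And>j u. j \<in> V - {v0} \<Longrightarrow> u \<in> V - {v0} \<Longrightarrow>
      g j \<bullet> (u - v0) = (if u = j then 1 else 0)"
    by (metis bchoice)
  define h where "h j = (if j = v0 then - (\<Sum>i\<in>V - {v0}. g i) else g j)" for j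
  have "h v \<bullet> (u - v) = -1" if "v \<in> V" "u \<in> V" "u \<noteq> v" for u v
  proof (cases "v = v0")
    case True
    have "h v \<bullet> (u - v) = - (\<Sum>i\<in>V - {v0}. g i \<bullet> (u - v0))"
      using True by (simp add: h_def inner_sum_left)
    also have "(\<Sum>i\<in>V - {v0}. g i \<bullet> (u - v0)) = (\<Sum>i\<in>V - {v0}. if u = i then 1 else 0)"
      using g that True by (intro sum.cong) auto
    also have "\<dots> = 1"
      using assms(1) that True by simp
    finally show ?thesis .
  next
    case False
    have "h v \<bullet> (u - v) = g v \<bullet> (u - v0) - g v \<bullet> (v - v0)"
      using False by (simp add: h_def inner_diff_right)
    moreover have "g v \<bullet> (v - v0) = 1"
      using g[of v v] that False by simp
    moreover have "g v \<bullet> (u - v0) = 0"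
      using g[of v u] that False by (cases "u = v0") auto
    ultimately show ?thesis
      by simp
  qed
  moreover have "sum h V = 0"
  proof -
    have "sum h V = h v0 + (\<Sum>i\<in>V - {v0}. h i)"
      using assms(1) v0 by (rule sum.remove)
    also have "(\<Sum>i\<in>V - {v0}. h i) = (\<Sum>i\<in>V - {v0}. g i)"
      by (rule sum.cong) (auto simp: h_def)
    finally show ?thesis
      by (simp add: h_def)
  qed
  ultimately show ?thesis
    unfolding barycentric_gradients_def by blast
qed

lemma cball_subset_simplex_radius_le:
  assumes "finite V" "barycentric_gradients V h" "cball x r \<subseteq> convex hull V" "0 \<le> r"
  shows "r * (\<Sum>v\<in>V. norm (h v)) \<le> 1"
proof -
  have "x \<in> convex hull V"
    using assms(3,4) by auto
  then have "V \<noteq> {}"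
    by auto
  have "r * norm (h v) \<le> barycentric_coord h v x" if "v \<in> V" for v
  proof -
    define z where "z = x - (r / norm (h v)) *\<^sub>R h v"
    have "dist x z \<le> r"
      using assms(4) by (cases "h v = 0") (simp_all add: z_def dist_norm)
    then have "0 \<le> barycentric_coord h v z"
      using assms(2,3) that by (intro barycentric_coord_nonneg) auto
    moreover have "barycentric_coord h v z = barycentric_coord h v x - r * norm (h v)"
      by (cases "h v = 0")
        (simp_all add: z_def barycentric_coord_def inner_diff_right dot_square_norm power2_eq_square)
    ultimately show ?thesis
      by simp
  qed
  then have "r * (\<Sum>v\<in>V. norm (h v)) \<le> (\<Sum>v\<in>V. barycentric_coord h v x)"
    by (simp add: sum_distrib_left sum_mono)
  also have "\<dots> = 1"
    using assms(1) \<open>V \<noteq> {}\<close> assms(2) by (rule sum_barycentric_coord)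
  finally show ?thesis .
qed

lemma inradius_convex_hull_mult_le:
  assumes "finite V" "barycentric_gradients V h"
  shows "inradius (convex hull V) * (\<Sum>v\<in>V. norm (h v)) \<le> 1"
proof (cases "(\<Sum>v\<in>V. norm (h v)) = 0")
  case False
  then have T: "0 < (\<Sum>v\<in>V. norm (h v))"
    by (simp add: sum_nonneg order_less_le)
  then obtain v where "v \<in> V"
    by (metis ex_in_conv sum.empty less_irrefl)
  then have "cball v 0 \<subseteq> convex hull V"
    by (simp add: hull_inc)
  then have "inradius (convex hull V) \<le> 1 / (\<Sum>v\<in>V. norm (h v))"
    unfolding inradius_def
  proof (intro cSup_least)
    show "{r. 0 \<le> r \<and> (\<exists>c. cball c r \<subseteq> convex hull V)} \<noteq> {}"
      using \<open>cball v 0 \<subseteq> convex hull V\<close> by blast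
  qed (use cball_subset_simplex_radius_le[OF assms] T in \<open>auto simp: pos_le_divide_eq\<close>)
  then show ?thesis
    using T by (simp add: pos_le_divide_eq)
qed simp

section \<open>Balls meeting all faces\<close>

(* R is the square of the radius: this is the quantity that passes to the facets, by Pythagoras. *)
definition ball_meets_faces :: "'a::real_inner set \<Rightarrow> nat \<Rightarrow> 'a \<Rightarrow> real \<Rightarrow> bool" where
  "ball_meets_faces V k c R \<longleftrightarrow>
     (\<forall>F. F \<subseteq> V \<and> card F = k \<longrightarrow> (\<exists>y\<in>affine hull F. (norm (c - y))\<^sup>2 \<le> R))"

lemma ball_meets_faces_facet:
  assumes "barycentric_gradients V h" "j \<in> V" "ball_meets_faces V k c R"
  shows "ball_meets_faces (V - {j}) k (c - (barycentric_coord h j c / (norm (h j))\<^sup>2) *\<^sub>R h j)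
    (R - (barycentric_coord h j c)\<^sup>2 / (norm (h j))\<^sup>2)"
    (is "ball_meets_faces _ _ ?c' ?R'")
  unfolding ball_meets_faces_def
proof (intro allI impI)
  fix F assume F: "F \<subseteq> V - {j} \<and> card F = k"
  then obtain y where y: "y \<in> affine hull F" "(norm (c - y))\<^sup>2 \<le> R"
    using assms(3) unfolding ball_meets_faces_def by blast
  have "barycentric_coord h j c = h j \<bullet> (c - y)"
    using barycentric_coord_eq_0[OF assms(1,2) _ y(1)] F barycentric_coord_diff[of h j c y] by simp
  then have "?c' - y = reject (h j) (c - y)"
    by (simp add: reject_def inner_commute algebra_simps)
  then have "(norm (?c' - y))\<^sup>2 \<le> ?R'"
    using y(2) \<open>barycentric_coord h j c = h j \<bullet> (c - y)\<close> by (simp add: norm_reject_sq inner_commute)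
  with y(1) show "\<exists>y\<in>affine hull F. (norm (?c' - y))\<^sup>2 \<le> ?R'"
    by blast
qed

lemma ball_meets_facets_bound:
  assumes "finite V" "V \<noteq> {}" "barycentric_gradients V h" "ball_meets_faces V (card V - 1) c R"
  shows "1 \<le> R * (\<Sum>v\<in>V. norm (h v))\<^sup>2"
proof -
  have near: "\<exists>y\<in>affine hull (V - {j}). (norm (c - y))\<^sup>2 \<le> R" if "j \<in> V" for j
    using assms(1,4) that unfolding ball_meets_faces_def by auto
  have "0 \<le> R"
    using near assms(2) by (meson all_not_in_conv order_trans zero_le_power2)
  have "\<bar>barycentric_coord h j c\<bar> \<le> norm (h j) * sqrt R" if j: "j \<in> V" for j
  proof -
    obtain y where y: "y \<in> affine hull (V - {j})" "(norm (c - y))\<^sup>2 \<le> R"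
      using near[OF j] by blast
    have "barycentric_coord h j c = h j \<bullet> (c - y)"
      using barycentric_coord_eq_0[OF assms(3) j _ y(1)] barycentric_coord_diff[of h j c y] by simp
    also have "\<bar>\<dots>\<bar> \<le> norm (h j) * norm (c - y)"
      by (rule Cauchy_Schwarz_ineq2)
    also have "\<dots> \<le> norm (h j) * sqrt R"
      using y(2) by (intro mult_left_mono real_le_rsqrt) auto
    finally show ?thesis .
  qed
  then have "(\<Sum>j\<in>V. barycentric_coord h j c) \<le> (\<Sum>j\<in>V. norm (h j)) * sqrt R"
    by (simp add: sum_distrib_right sum_mono abs_le_iff)
  then have "1 \<le> sqrt R * (\<Sum>j\<in>V. norm (h j))"
    using sum_barycentric_coord[OF assms(1-3)] by (simp add: mult.commute)
  then have "1 \<le> (sqrt R * (\<Sum>j\<in>V. norm (h j)))\<^sup>2"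
    by (simp add: one_le_power)
  then show ?thesis
    using \<open>0 \<le> R\<close> by (simp add: power_mult_distrib)
qed

lemma ball_meets_faces_bound:
  fixes V :: "'a::real_inner set"
  assumes "Suc k \<le> n" "finite V" "card V = n" "barycentric_gradients V h"
    "ball_meets_faces V k c R" "1 \<le> k"
  shows "real (n - 1) * real (n - k) / real k \<le> R * (\<Sum>v\<in>V. norm (h v))\<^sup>2"
  using assms(1-5)
proof (induction n arbitrary: V h c R rule: nat_induct_at_least)
  case base
  then have "1 \<le> R * (\<Sum>v\<in>V. norm (h v))\<^sup>2"
    by (intro ball_meets_facets_bound) auto
  then show ?case
    using \<open>1 \<le> k\<close> by simp
next
  case (Suc n)
  define t l x where "t j = norm (h j)" and "l j = barycentric_coord h j c"
    and "x j = (\<Sum>i\<in>V - {j}. norm (reject (h j) (h i)))" for j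
  define \<alpha> where "\<alpha> = real (n - 1) * real (n - k) / real k"
  have "0 < \<alpha>"
    using Suc.hyps \<open>1 \<le> k\<close> by (simp add: \<alpha>_def)
  have card_facet: "card (V - {j}) = n" if "j \<in> V" for j
    using Suc.prems(1,2) that by simp
  have t: "0 < t j" if "j \<in> V" for j
  proof -
    have "0 < card (V - {j})"
      using card_facet[OF that] Suc.hyps by simp
    then obtain u where "u \<in> V - {j}"
      by (metis card_gt_0_iff ex_in_conv)
    then show ?thesis
      using barycentric_gradient_nonzero[OF Suc.prems(3) that] by (auto simp: t_def)
  qed
  have facet: "\<alpha> \<le> (R - (l j)\<^sup>2 / (t j)\<^sup>2) * (x j)\<^sup>2" if j: "j \<in> V" for j
    unfolding \<alpha>_def l_def t_def x_def
    using Suc.IH[OF _ card_facet[OF j] barycentric_gradients_facet[OF Suc.prems(1,3) j]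
        ball_meets_faces_facet[OF Suc.prems(3) j Suc.prems(4)]] Suc.prems(1)
    by simp
  have x: "0 < x j" if "j \<in> V" for j
  proof -
    have "x j \<noteq> 0"
      using facet[OF that] \<open>0 < \<alpha>\<close> by auto
    then show ?thesis
      by (simp add: x_def sum_nonneg order_less_le)
  qed
  have R: "(l j)\<^sup>2 / (t j)\<^sup>2 + \<alpha> / (x j)\<^sup>2 \<le> R" if "j \<in> V" for j
  proof -
    have "\<alpha> / (x j)\<^sup>2 \<le> R - (l j)\<^sup>2 / (t j)\<^sup>2"
      using facet[OF that] x[OF that] by (metis pos_divide_le_eq zero_less_power)
    then show ?thesis
      by simp
  qed
  have "real (Suc n) * (\<Sum>j\<in>V. t j * x j)\<^sup>2 \<le> (real (Suc n) - 2) * (\<Sum>j\<in>V. t j) ^ 4"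
    using sum_parallelogram_areas_le[of V h] Suc.prems
    by (simp add: t_def x_def sum_distrib_left barycentric_gradients_def)
  then have "real (Suc n) / (real n - 1) * (\<Sum>j\<in>V. t j * x j)\<^sup>2 \<le> (\<Sum>j\<in>V. t j) ^ 4"
    using Suc.hyps \<open>1 \<le> k\<close> by (simp add: field_simps)
  moreover have "V \<noteq> {}"
    using Suc.prems(2) by auto
  then have "sum l V = 1"
    unfolding l_def using Suc.prems(1,3) by (intro sum_barycentric_coord)
  ultimately have "1 + \<alpha> * (real (Suc n) / (real n - 1)) \<le> R * (\<Sum>j\<in>V. t j)\<^sup>2"
    using t x R \<open>0 < \<alpha>\<close> by (intro combine_facet_bounds[where l = l]) auto
  moreover have "real (Suc n - 1) * real (Suc n - k) / real k = 1 + \<alpha> * (real (Suc n) / (real n - 1))"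
    using Suc.hyps \<open>1 \<le> k\<close> by (simp add: \<alpha>_def of_nat_diff field_simps)
  ultimately show ?case
    by (simp add: t_def)
qed

lemma ball_meets_faces_cball:
  assumes "\<forall>F. F \<subseteq> V \<and> card F = k \<longrightarrow> cball c \<rho> \<inter> affine hull F \<noteq> {}"
  shows "ball_meets_faces V k c (\<rho>\<^sup>2)"
  unfolding ball_meets_faces_def
proof (intro allI impI)
  fix F assume "F \<subseteq> V \<and> card F = k"
  then have "cball c \<rho> \<inter> affine hull F \<noteq> {}"
    using assms by blast
  then obtain y where "y \<in> affine hull F" "dist c y \<le> \<rho>"
    by auto
  then show "\<exists>y\<in>affine hull F. (norm (c - y))\<^sup>2 \<le> \<rho>\<^sup>2"
    by (metis dist_norm power_mono zero_le_dist)
qed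

lemma inradius_bound_if_ball_meets_faces:
  fixes V :: "'a::euclidean_space set"
  assumes "finite V" "barycentric_gradients V h" "ball_meets_faces V k c (\<rho>\<^sup>2)" "0 \<le> \<rho>"
    "1 \<le> k" "k < card V"
  shows "sqrt (real (card V - 1) * real (card V - k) / real k) * inradius (convex hull V) \<le> \<rho>"
proof -
  define s T r where "s = sqrt (real (card V - 1) * real (card V - k) / real k)"
    and "T = (\<Sum>v\<in>V. norm (h v))" and "r = inradius (convex hull V)"
  have "real (card V - 1) * real (card V - k) / real k \<le> (\<rho> * T)\<^sup>2"
    using ball_meets_faces_bound[of k "card V" V h c "\<rho>\<^sup>2"] assms
    by (simp add: T_def power_mult_distrib)
  then have "s \<le> \<rho> * T"
    unfolding s_def using assms(4) by (intro real_le_lsqrt) (simp_all add: T_def sum_nonneg)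
  moreover have "r * T \<le> 1"
    unfolding r_def T_def using assms(1,2) by (rule inradius_convex_hull_mult_le)
  moreover have "0 \<le> s"
    by (simp add: s_def)
  ultimately have "s * r \<le> \<rho>"
  proof (cases "r \<le> 0")
    case False
    assume "s \<le> \<rho> * T" "r * T \<le> 1"
    then have "s * r \<le> \<rho> * (r * T)"
      using False by (simp add: mult_right_mono algebra_simps)
    also have "\<dots> \<le> \<rho>"
      using \<open>r * T \<le> 1\<close> assms(4) by (simp add: mult_left_le)
    finally show ?thesis .
  qed (use assms(4) mult_nonneg_nonpos in fastforce)
  then show ?thesis
    by (simp add: s_def r_def)
qed

theorem theorem5p2:
  fixes V :: "'a::euclidean_space set" and n k :: nat and c :: 'a and \<rho> :: real
  assumes "n \<ge> 2" and "DIM('a) = n - 1"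
    and "finite V" and "card V = n" and "\<not> affine_dependent V"
    and "1 \<le> k" and "k \<le> n"
    and "\<forall>F. F \<subseteq> V \<and> card F = k \<longrightarrow> cball c \<rho> \<inter> affine hull F \<noteq> {}"
  shows "\<rho> \<ge> sqrt (real (n - 1) * real (n - k) / real k) * inradius (convex hull V)"
proof -
  obtain h where h: "barycentric_gradients V h"
    using barycentric_gradients_exist[OF assms(3,5)] by blast
  obtain F where "F \<subseteq> V" "card F = k"
    using obtain_subset_with_card_n[of k V] assms(4,7) by auto
  then have "cball c \<rho> \<noteq> {}"
    using assms(8) by blast
  then have "0 \<le> \<rho>"
    by (simp add: cball_eq_empty)
  show ?thesis
  proof (cases "k = n")
    case False
    then show ?thesis
      using inradius_bound_if_ball_meets_faces[OF assms(3) h ball_meets_faces_cball[OF assms(8)]]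
        \<open>0 \<le> \<rho>\<close> assms(4,6,7) by simp
  qed (simp add: \<open>0 \<le> \<rho>\<close>)
qed

end
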